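(* Let $p_1\in[0,1]$, $\alpha_1=2p_1-1$, and let $d_n(k)$ and $\tilde S^{(k)}$ be as in the context. Then, as $n\to\infty$, $$\sum_{k=1}^n\mathbb E\big(\tilde S^{(k)}_{d_n(k)}\big)^2=n(1+2\alpha_1^2)+O(\log^2 n).$$
   Context: Let $(u_j)_{j\ge1}$ be independent random variables with $u_j$ uniform on $\{1,\dots,j\}$. For $n\ge k\ge1$ let $d_n(k):=\#\{j\in\{k,\dots,n-1\}:u_j=k\}$ (so $d_n(n)=0$); i.e. $d_n(k)$ is the out-degree of vertex $k$ in the random recursive tree on $\{1,\dots,n\}$ where vertex $j+1$ attaches to $u_j$. Let $(\tilde S^{(k)})_{k\ge1}$ be independent random walks, independent of $(u_j)$, each with $\tilde S^{(k)}_0=0$ and i.i.d. increments equal to $+1$ with probability $p_1$ and $-1$ with probability $1-p_1$. *)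

theory Defs
  imports "HOL-Probability.Probability" "HOL-Library.Landau_Symbols"
begin

text \<open>Attachment choices u_1..u_{n-1}, independent, u_j uniform on {1..j}.\<close>
definition rrt_pmf :: "nat \<Rightarrow> (nat \<Rightarrow> nat) pmf" where
  "rrt_pmf n = Pi_pmf {1..<n} 0 (\<lambda>j. pmf_of_set {1..j})"

definition rrt_deg :: "nat \<Rightarrow> (nat \<Rightarrow> nat) \<Rightarrow> nat \<Rightarrow> nat" where
  "rrt_deg n u k = card {j \<in> {k..<n}. u j = k}"

text \<open>Increments of the walks S^(1..n); only the first n steps are needed since d_n(k) < n.
  True means increment +1 (probability p1), False means -1.\<close>
definition walks_pmf :: "real \<Rightarrow> nat \<Rightarrow> (nat \<Rightarrow> nat \<Rightarrow> bool) pmf" where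
  "walks_pmf p1 n = Pi_pmf {1..n} (\<lambda>_. False) (\<lambda>k. Pi_pmf {0..<n} False (\<lambda>_. bernoulli_pmf p1))"

definition walk_pos :: "(nat \<Rightarrow> bool) \<Rightarrow> nat \<Rightarrow> int" where
  "walk_pos X m = (\<Sum>i<m. if X i then 1 else -1)"

definition joint_pmf :: "real \<Rightarrow> nat \<Rightarrow> ((nat \<Rightarrow> nat) \<times> (nat \<Rightarrow> nat \<Rightarrow> bool)) pmf" where
  "joint_pmf p1 n = pair_pmf (rrt_pmf n) (walks_pmf p1 n)"

definition sum_second_moments :: "real \<Rightarrow> nat \<Rightarrow> real" where
  "sum_second_moments p1 n = (\<Sum>k=1..n. measure_pmf.expectation (joint_pmf p1 n)
      (\<lambda>(u, X). (real_of_int (walk_pos (X k) (rrt_deg n u k)))^2))"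

end

(*
  Given the tree, the walk S^(k) is observed after d = d_n(k) independent steps of mean
  alpha1 and variance 1 - alpha1^2, so its second moment is (1 - alpha1^2) d + alpha1^2 d^2.
  The degree d_n(k) is a sum of independent Bernoulli(1/j) indicators, j = k..n-1, hence
  E d = A_k := sum_{j=k}^{n-1} 1/j and E d^2 = A_k^2 + A_k - sum_{j=k}^{n-1} 1/j^2.
  Summing over k with sum_k A_k = n - 1, sum_k A_k^2 = 2(n - 1) - H_{n-1} and
  sum_k sum_{j>=k} 1/j^2 = H_{n-1} gives the exact value
  (n - 1)(1 + 2 alpha1^2) - 2 alpha1^2 H_{n-1}; the deviation is in fact O(log n).
*)
theory Submission
  imports Defs "HOL-Analysis.Harmonic_Numbers" "HOL-Real_Asymp.Real_Asymp"
begin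

lemma
  fixes g :: "'b \<Rightarrow> real"
  assumes "finite A" "i \<in> A"
  shows expectation_Pi_pmf_component:
      "measure_pmf.expectation (Pi_pmf A dflt p) (\<lambda>X. g (X i)) = measure_pmf.expectation (p i) g"
    and integrable_Pi_pmf_component:
      "integrable (measure_pmf (Pi_pmf A dflt p)) (\<lambda>X. g (X i)) \<longleftrightarrow> integrable (measure_pmf (p i)) g"
  using assms integral_map_pmf[of "\<lambda>X. X i" "Pi_pmf A dflt p" g]
    integrable_map_pmf_eq[of "\<lambda>X. X i" "Pi_pmf A dflt p" g]
  by (simp_all add: Pi_pmf_component)

lemma
  fixes f :: "'a \<Rightarrow> 'b \<Rightarrow> real"
  assumes "finite A" "S \<subseteq> A" "\<And>i. i \<in> S \<Longrightarrow> integrable (measure_pmf (p i)) (f i)"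
  shows expectation_prod_Pi_pmf_subset:
      "measure_pmf.expectation (Pi_pmf A dflt p) (\<lambda>X. \<Prod>i\<in>S. f i (X i))
       = (\<Prod>i\<in>S. measure_pmf.expectation (p i) (f i))"
    and integrable_prod_Pi_pmf_subset:
      "integrable (measure_pmf (Pi_pmf A dflt p)) (\<lambda>X. \<Prod>i\<in>S. f i (X i))"
proof -
  let ?P = "Pi_pmf A dflt p"
  have S: "finite S" "\<And>i. i \<in> S \<Longrightarrow> i \<in> A"
    using assms(1,2) by (auto intro: finite_subset)
  have indep: "prob_space.indep_vars (measure_pmf ?P) (\<lambda>_. borel) (\<lambda>i X. f i (X i)) S"
    using prob_space.indep_vars_subset[OF measure_pmf.prob_space_axioms
        indep_vars_Pi_pmf[OF assms(1)] assms(2)]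
    by (rule prob_space.indep_vars_compose2[OF measure_pmf.prob_space_axioms]) simp
  have integrable: "\<And>i. i \<in> S \<Longrightarrow> integrable (measure_pmf ?P) (\<lambda>X. f i (X i))"
    using assms(1,3) S by (simp add: integrable_Pi_pmf_component)
  show "integrable (measure_pmf ?P) (\<lambda>X. \<Prod>i\<in>S. f i (X i))"
    using S(1) indep integrable by (rule prob_space.indep_vars_integrable[OF measure_pmf.prob_space_axioms])
  have "measure_pmf.expectation ?P (\<lambda>X. \<Prod>i\<in>S. f i (X i))
      = (\<Prod>i\<in>S. measure_pmf.expectation ?P (\<lambda>X. f i (X i)))"
    using S(1) indep integrable by (rule prob_space.indep_vars_lebesgue_integral[OF measure_pmf.prob_space_axioms])
  also have "\<dots> = (\<Prod>i\<in>S. measure_pmf.expectation (p i) (f i))"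
    using assms(1) S by (intro prod.cong refl expectation_Pi_pmf_component) auto
  finally show "measure_pmf.expectation ?P (\<lambda>X. \<Prod>i\<in>S. f i (X i))
      = (\<Prod>i\<in>S. measure_pmf.expectation (p i) (f i))" .
qed

lemma
  fixes f :: "'a \<Rightarrow> 'b \<Rightarrow> real"
  assumes A: "finite A" "i \<in> A" "j \<in> A"
    and integrable: "\<And>l. l \<in> {i, j} \<Longrightarrow> integrable (measure_pmf (p l)) (f l)"
    and square_integrable: "integrable (measure_pmf (p i)) (\<lambda>x. (f i x)\<^sup>2)"
  shows integrable_mult_Pi_pmf:
      "integrable (measure_pmf (Pi_pmf A dflt p)) (\<lambda>X. f i (X i) * f j (X j))" (is ?integrable)
    and expectation_mult_Pi_pmf:
      "measure_pmf.expectation (Pi_pmf A dflt p) (\<lambda>X. f i (X i) * f j (X j))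
       = measure_pmf.expectation (p i) (f i) * measure_pmf.expectation (p j) (f j)
         + (if i = j then measure_pmf.variance (p i) (f i) else 0)" (is ?expectation)
proof -
  have "?integrable \<and> ?expectation"
  proof (cases "i = j")
    case True
    have "measure_pmf.expectation (Pi_pmf A dflt p) (\<lambda>X. (f i (X i))\<^sup>2)
        = measure_pmf.expectation (p i) (\<lambda>x. (f i x)\<^sup>2)"
      using A(1,2) by (rule expectation_Pi_pmf_component)
    also have "\<dots> = (measure_pmf.expectation (p i) (f i))\<^sup>2 + measure_pmf.variance (p i) (f i)"
      using measure_pmf.variance_eq[OF integrable square_integrable] by simp
    finally have "measure_pmf.expectation (Pi_pmf A dflt p) (\<lambda>X. (f i (X i))\<^sup>2)
        = (measure_pmf.expectation (p i) (f i))\<^sup>2 + measure_pmf.variance (p i) (f i)" .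
    moreover have "integrable (measure_pmf (Pi_pmf A dflt p)) (\<lambda>X. (f i (X i))\<^sup>2)"
      using integrable_Pi_pmf_component[OF A(1,2), where g = "\<lambda>x. (f i x)\<^sup>2"] square_integrable
      by blast
    ultimately show ?thesis
      using True by (simp add: power2_eq_square)
  next
    case False
    have "(\<lambda>X. f i (X i) * f j (X j)) = (\<lambda>X. \<Prod>l\<in>{i, j}. f l (X l))"
      using False by auto
    moreover have ij: "{i, j} \<subseteq> A"
      using A by auto
    ultimately show ?thesis
      using False expectation_prod_Pi_pmf_subset[where p = p and f = f, OF A(1) ij integrable]
        integrable_prod_Pi_pmf_subset[where p = p and f = f, OF A(1) ij integrable]
      by simp
  qed
  then show ?integrable ?expectation
    by auto
qed

lemma expectation_square_sum_Pi_pmf: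
  fixes f :: "'a \<Rightarrow> 'b \<Rightarrow> real"
  assumes "finite A" "S \<subseteq> A"
    and integrable: "\<And>i. i \<in> S \<Longrightarrow> integrable (measure_pmf (p i)) (f i)"
    and square_integrable: "\<And>i. i \<in> S \<Longrightarrow> integrable (measure_pmf (p i)) (\<lambda>x. (f i x)\<^sup>2)"
  shows "measure_pmf.expectation (Pi_pmf A dflt p) (\<lambda>X. (\<Sum>i\<in>S. f i (X i))\<^sup>2)
       = (\<Sum>i\<in>S. measure_pmf.expectation (p i) (f i))\<^sup>2 + (\<Sum>i\<in>S. measure_pmf.variance (p i) (f i))"
proof -
  let ?P = "Pi_pmf A dflt p"
  define \<mu> where "\<mu> i = measure_pmf.expectation (p i) (f i)" for i
  define \<sigma>2 where "\<sigma>2 i = measure_pmf.variance (p i) (f i)" for i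
  have S: "finite S" "\<And>i. i \<in> S \<Longrightarrow> i \<in> A"
    using assms(1,2) by (auto intro: finite_subset)
  have pair: "integrable (measure_pmf ?P) (\<lambda>X. f i (X i) * f j (X j))"
    "measure_pmf.expectation ?P (\<lambda>X. f i (X i) * f j (X j)) = \<mu> i * \<mu> j + (if i = j then \<sigma>2 i else 0)"
    if "i \<in> S" "j \<in> S" for i j
    using that assms(1) S(2) integrable square_integrable unfolding \<mu>_def \<sigma>2_def
    by (intro integrable_mult_Pi_pmf expectation_mult_Pi_pmf; auto)+
  have "measure_pmf.expectation ?P (\<lambda>X. (\<Sum>i\<in>S. f i (X i))\<^sup>2)
      = measure_pmf.expectation ?P (\<lambda>X. \<Sum>i\<in>S. \<Sum>j\<in>S. f i (X i) * f j (X j))"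
    by (simp add: power2_eq_square sum_product)
  also have "\<dots> = (\<Sum>i\<in>S. \<Sum>j\<in>S. \<mu> i * \<mu> j + (if i = j then \<sigma>2 i else 0))"
    using pair by (simp add: Bochner_Integration.integral_sum integrable_sum)
  also have "\<dots> = (\<Sum>i\<in>S. \<mu> i)\<^sup>2 + (\<Sum>i\<in>S. \<sigma>2 i)"
    using S(1) by (simp add: sum.distrib power2_eq_square sum_product)
  finally show ?thesis by (simp add: \<mu>_def \<sigma>2_def)
qed

lemma expectation_pair_pmf:
  fixes f :: "'a \<times> 'b \<Rightarrow> real"
  assumes nonneg: "\<And>x. 0 \<le> f x" and bounded: "\<And>x. f x \<le> B"
  shows "measure_pmf.expectation (pair_pmf P Q) f
       = measure_pmf.expectation P (\<lambda>a. measure_pmf.expectation Q (\<lambda>b. f (a, b)))"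
proof -
  have integrable: "integrable (measure_pmf M) g" if "\<And>x. 0 \<le> g x" "\<And>x. g x \<le> B"
    for M and g :: "'c \<Rightarrow> real"
    using that by (intro measure_pmf.integrable_const_bound[where B = B]) auto
  have inner_nonneg: "0 \<le> measure_pmf.expectation Q (\<lambda>b. f (a, b))" for a
    by (intro Bochner_Integration.integral_nonneg nonneg)
  have inner_bounded: "measure_pmf.expectation Q (\<lambda>b. f (a, b)) \<le> B" for a
    using integral_mono[OF integrable[of "\<lambda>b. f (a, b)"] _ bounded, of Q] nonneg bounded
    by (simp add: integrable)
  have "ennreal (measure_pmf.expectation (pair_pmf P Q) f) = (\<integral>\<^sup>+x. ennreal (f x) \<partial>pair_pmf P Q)"
    by (rule nn_integral_eq_integral[symmetric]) (auto intro: integrable nonneg bounded)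
  also have "\<dots> = (\<integral>\<^sup>+a. \<integral>\<^sup>+b. ennreal (f (a, b)) \<partial>Q \<partial>P)"
    by (rule nn_integral_pair_pmf')
  also have "\<dots> = (\<integral>\<^sup>+a. ennreal (measure_pmf.expectation Q (\<lambda>b. f (a, b))) \<partial>P)"
    by (intro nn_integral_cong nn_integral_eq_integral) (auto intro: integrable nonneg bounded)
  also have "\<dots> = ennreal (measure_pmf.expectation P (\<lambda>a. measure_pmf.expectation Q (\<lambda>b. f (a, b))))"
    by (intro nn_integral_eq_integral) (auto intro: integrable inner_nonneg inner_bounded)
  finally show ?thesis
    by (subst (asm) ennreal_inj) (auto intro!: Bochner_Integration.integral_nonneg nonneg inner_nonneg)
qed

lemma abs_walk_pos_le: "\<bar>walk_pos X m\<bar> \<le> int m"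
proof -
  have "\<bar>walk_pos X m\<bar> \<le> (\<Sum>i<m. \<bar>if X i then 1 else -1\<bar>)"
    unfolding walk_pos_def by (rule sum_abs)
  also have "\<dots> = (\<Sum>i<m. 1)"
    by (intro sum.cong) auto
  finally show ?thesis by simp
qed

lemma expectation_walk_pos_square:
  assumes "m \<le> n" "0 \<le> p" "p \<le> 1"
  shows "measure_pmf.expectation (Pi_pmf {0..<n} False (\<lambda>_. bernoulli_pmf p))
           (\<lambda>X. (real_of_int (walk_pos X m))\<^sup>2)
       = (1 - (2 * p - 1)\<^sup>2) * real m + (2 * p - 1)\<^sup>2 * (real m)\<^sup>2"
proof -
  define step :: "bool \<Rightarrow> real" where "step b = (if b then 1 else -1)" for b
  have walk: "real_of_int (walk_pos X m) = (\<Sum>i\<in>{..<m}. step (X i))" for X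
    unfolding walk_pos_def step_def of_int_sum by (intro sum.cong) auto
  have integrable: "integrable (measure_pmf (bernoulli_pmf p)) g" for g :: "bool \<Rightarrow> real"
    by (intro integrable_measure_pmf_finite) simp
  have mean: "measure_pmf.expectation (bernoulli_pmf p) step = 2 * p - 1"
    using assms by (simp add: step_def)
  have variance: "measure_pmf.variance (bernoulli_pmf p) step = 1 - (2 * p - 1)\<^sup>2"
    using assms by (simp add: step_def power2_eq_square algebra_simps)
  have "measure_pmf.expectation (Pi_pmf {0..<n} False (\<lambda>_. bernoulli_pmf p))
           (\<lambda>X. (\<Sum>i\<in>{..<m}. step (X i))\<^sup>2)
       = (\<Sum>i\<in>{..<m}. measure_pmf.expectation (bernoulli_pmf p) step)\<^sup>2
         + (\<Sum>i\<in>{..<m}. measure_pmf.variance (bernoulli_pmf p) step)"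
    using assms(1) by (intro expectation_square_sum_Pi_pmf integrable) auto
  also have "\<dots> = (real m * (2 * p - 1))\<^sup>2 + real m * (1 - (2 * p - 1)\<^sup>2)"
    by (subst variance) (simp add: mean)
  finally show ?thesis
    by (simp add: walk power2_eq_square algebra_simps)
qed

lemma expectation_walks_pmf_walk_pos_square:
  assumes "0 \<le> p" "p \<le> 1" "k \<in> {1..n}" "d \<le> n"
  shows "measure_pmf.expectation (walks_pmf p n) (\<lambda>X. (real_of_int (walk_pos (X k) d))\<^sup>2)
       = (1 - (2 * p - 1)\<^sup>2) * real d + (2 * p - 1)\<^sup>2 * (real d)\<^sup>2"
proof -
  have "measure_pmf.expectation (walks_pmf p n) (\<lambda>X. (real_of_int (walk_pos (X k) d))\<^sup>2)
      = measure_pmf.expectation (Pi_pmf {0..<n} False (\<lambda>_. bernoulli_pmf p))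
          (\<lambda>Y. (real_of_int (walk_pos Y d))\<^sup>2)"
    unfolding walks_pmf_def using assms(3) by (intro expectation_Pi_pmf_component) auto
  also have "\<dots> = (1 - (2 * p - 1)\<^sup>2) * real d + (2 * p - 1)\<^sup>2 * (real d)\<^sup>2"
    using assms(4,1,2) by (rule expectation_walk_pos_square)
  finally show ?thesis .
qed

definition harm_tail :: "nat \<Rightarrow> nat \<Rightarrow> real" where
  "harm_tail n k = (\<Sum>j\<in>{k..<n}. 1 / real j)"

lemma rrt_deg_le: "rrt_deg n u k \<le> n"
proof -
  have "rrt_deg n u k \<le> card {k..<n}"
    unfolding rrt_deg_def by (intro card_mono) auto
  then show ?thesis by simp
qed

lemma rrt_deg_eq_sum: "real (rrt_deg n u k) = (\<Sum>j\<in>{k..<n}. if u j = k then 1 else 0)"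
  by (simp add: rrt_deg_def sum.If_cases Int_def)

lemma
  assumes "finite S" "k \<in> S"
  shows expectation_indicator_pmf_of_set:
      "measure_pmf.expectation (pmf_of_set S) (\<lambda>v. if v = k then 1 else 0) = 1 / real (card S)"
    and variance_indicator_pmf_of_set:
      "measure_pmf.variance (pmf_of_set S) (\<lambda>v. if v = k then 1 else 0)
       = 1 / real (card S) - 1 / (real (card S))\<^sup>2"
proof -
  let ?ind = "\<lambda>v. if v = k then 1 else 0 :: real"
  show mean: "measure_pmf.expectation (pmf_of_set S) ?ind = 1 / real (card S)"
    using assms by (subst integral_pmf_of_set) auto
  have "measure_pmf.variance (pmf_of_set S) ?ind
      = measure_pmf.expectation (pmf_of_set S) (\<lambda>v. (?ind v)\<^sup>2) - (measure_pmf.expectation (pmf_of_set S) ?ind)\<^sup>2"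
  proof -
    have "finite (set_pmf (pmf_of_set S))"
      using assms by (subst set_pmf_of_set) auto
    then show ?thesis
      by (intro measure_pmf.variance_eq integrable_measure_pmf_finite)
  qed
  also have "(\<lambda>v. (?ind v)\<^sup>2) = ?ind"
    by auto
  finally show "measure_pmf.variance (pmf_of_set S) ?ind = 1 / real (card S) - 1 / (real (card S))\<^sup>2"
    by (simp add: mean power_divide)
qed

lemma
  assumes "1 \<le> k"
  shows expectation_rrt_deg: "measure_pmf.expectation (rrt_pmf n) (\<lambda>u. real (rrt_deg n u k)) = harm_tail n k"
    and expectation_rrt_deg_square: "measure_pmf.expectation (rrt_pmf n) (\<lambda>u. (real (rrt_deg n u k))\<^sup>2)
      = (harm_tail n k)\<^sup>2 + harm_tail n k - (\<Sum>j\<in>{k..<n}. 1 / (real j)\<^sup>2)"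
proof -
  define ind :: "nat \<Rightarrow> real" where "ind = (\<lambda>v. if v = k then 1 else 0)"
  have deg: "real (rrt_deg n u k) = (\<Sum>j\<in>{k..<n}. ind (u j))" for u
    by (simp add: rrt_deg_eq_sum ind_def)
  have S: "{k..<n} \<subseteq> {1..<n}"
    using assms by auto
  have integrable: "integrable (measure_pmf (pmf_of_set {1..j})) g" if "j \<in> {k..<n}" for j and g :: "nat \<Rightarrow> real"
    using that assms by (intro integrable_measure_pmf_finite) auto
  have mean: "measure_pmf.expectation (pmf_of_set {1..j}) ind = 1 / real j"
    and variance: "measure_pmf.variance (pmf_of_set {1..j}) ind = 1 / real j - 1 / (real j)\<^sup>2"
    if "j \<in> {k..<n}" for j
    using that assms expectation_indicator_pmf_of_set[of "{1..j}" k] variance_indicator_pmf_of_set[of "{1..j}" k]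
    by (simp_all add: ind_def)
  have "measure_pmf.expectation (rrt_pmf n) (\<lambda>u. real (rrt_deg n u k))
      = (\<Sum>j\<in>{k..<n}. measure_pmf.expectation (rrt_pmf n) (\<lambda>u. ind (u j)))"
    unfolding deg using S integrable by (intro Bochner_Integration.integral_sum)
      (auto simp: rrt_pmf_def integrable_Pi_pmf_component)
  also have "\<dots> = (\<Sum>j\<in>{k..<n}. measure_pmf.expectation (pmf_of_set {1..j}) ind)"
    unfolding rrt_pmf_def using S by (intro sum.cong refl expectation_Pi_pmf_component) auto
  finally show "measure_pmf.expectation (rrt_pmf n) (\<lambda>u. real (rrt_deg n u k)) = harm_tail n k"
    by (simp only: sum.cong[OF refl mean] harm_tail_def)
  have "measure_pmf.expectation (rrt_pmf n) (\<lambda>u. (real (rrt_deg n u k))\<^sup>2)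
      = (\<Sum>j\<in>{k..<n}. measure_pmf.expectation (pmf_of_set {1..j}) ind)\<^sup>2
        + (\<Sum>j\<in>{k..<n}. measure_pmf.variance (pmf_of_set {1..j}) ind)"
    unfolding deg rrt_pmf_def using S by (intro expectation_square_sum_Pi_pmf integrable) auto
  also have "\<dots> = (\<Sum>j\<in>{k..<n}. 1 / real j)\<^sup>2 + (\<Sum>j\<in>{k..<n}. 1 / real j - 1 / (real j)\<^sup>2)"
    by (simp only: sum.cong[OF refl mean] sum.cong[OF refl variance])
  finally show "measure_pmf.expectation (rrt_pmf n) (\<lambda>u. (real (rrt_deg n u k))\<^sup>2)
      = (harm_tail n k)\<^sup>2 + harm_tail n k - (\<Sum>j\<in>{k..<n}. 1 / (real j)\<^sup>2)"
    by (simp add: harm_tail_def sum_subtractf)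
qed

lemma expectation_walk_at_rrt_deg:
  assumes p: "0 \<le> p" "p \<le> 1" and k: "k \<in> {1..n}"
  shows "measure_pmf.expectation (joint_pmf p n)
           (\<lambda>(u, X). (real_of_int (walk_pos (X k) (rrt_deg n u k)))\<^sup>2)
       = harm_tail n k + (2 * p - 1)\<^sup>2 * ((harm_tail n k)\<^sup>2 - (\<Sum>j\<in>{k..<n}. 1 / (real j)\<^sup>2))"
proof -
  let ?a = "(2 * p - 1)\<^sup>2"
  have bounded: "(real_of_int (walk_pos (X k) (rrt_deg n u k)))\<^sup>2 \<le> (real n)\<^sup>2" for u X
  proof -
    have "\<bar>walk_pos (X k) (rrt_deg n u k)\<bar> \<le> int n"
      using abs_walk_pos_le[of "X k" "rrt_deg n u k"] rrt_deg_le[of n u k] by linarith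
    then show ?thesis
      by (simp add: abs_le_square_iff[symmetric])
  qed
  have integrable: "integrable (measure_pmf (rrt_pmf n)) (\<lambda>u. g (rrt_deg n u k))" for g :: "nat \<Rightarrow> real"
    by (rule measure_pmf.integrable_const_bound[where B = "Max (abs ` g ` {..n})"])
      (auto intro!: Max_ge simp: rrt_deg_le)
  have "measure_pmf.expectation (joint_pmf p n)
          (\<lambda>(u, X). (real_of_int (walk_pos (X k) (rrt_deg n u k)))\<^sup>2)
      = measure_pmf.expectation (rrt_pmf n) (\<lambda>u. measure_pmf.expectation (walks_pmf p n)
          (\<lambda>X. (real_of_int (walk_pos (X k) (rrt_deg n u k)))\<^sup>2))"
    unfolding joint_pmf_def using bounded by (subst expectation_pair_pmf) auto
  also have "\<dots> = measure_pmf.expectation (rrt_pmf n)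
      (\<lambda>u. (1 - ?a) * real (rrt_deg n u k) + ?a * (real (rrt_deg n u k))\<^sup>2)"
    using p k by (intro Bochner_Integration.integral_cong refl expectation_walks_pmf_walk_pos_square rrt_deg_le)
  also have "\<dots> = (1 - ?a) * measure_pmf.expectation (rrt_pmf n) (\<lambda>u. real (rrt_deg n u k))
      + ?a * measure_pmf.expectation (rrt_pmf n) (\<lambda>u. (real (rrt_deg n u k))\<^sup>2)"
    using integrable[of real] integrable[of "\<lambda>d. (real d)\<^sup>2"] by simp
  also have "\<dots> = harm_tail n k + ?a * ((harm_tail n k)\<^sup>2 - (\<Sum>j\<in>{k..<n}. 1 / (real j)\<^sup>2))"
    using k by (simp add: expectation_rrt_deg expectation_rrt_deg_square algebra_simps)
  finally show ?thesis .
qed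

lemma sum_sum_atLeastLessThan_swap:
  fixes g :: "nat \<Rightarrow> real"
  shows "(\<Sum>k=1..n. \<Sum>j\<in>{k..<n}. g j) = (\<Sum>j\<in>{1..<n}. real j * g j)"
proof (induction n)
  case (Suc n)
  have "(\<Sum>k=1..Suc n. \<Sum>j\<in>{k..<Suc n}. g j) = (\<Sum>k=1..n. (\<Sum>j\<in>{k..<n}. g j) + g n)"
    by (simp add: sum.distrib)
  also have "\<dots> = (\<Sum>j\<in>{1..<Suc n}. real j * g j)"
    using Suc by (cases n) (simp_all add: sum.distrib)
  finally show ?case .
qed simp

lemma harm_tail_Suc: "k \<le> n \<Longrightarrow> harm_tail (Suc n) k = harm_tail n k + 1 / real n"
  by (simp add: harm_tail_def)

lemma sum_harm_tail: "(\<Sum>k=1..n. harm_tail n k) = real (n - 1)"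
proof -
  have "(\<Sum>k=1..n. harm_tail n k) = (\<Sum>j\<in>{1..<n}. real j * (1 / real j))"
    unfolding harm_tail_def by (rule sum_sum_atLeastLessThan_swap)
  also have "\<dots> = (\<Sum>j\<in>{1..<n}. 1)"
    by (intro sum.cong) auto
  finally show ?thesis by simp
qed

lemma sum_harm_tail_square: "(\<Sum>k=1..Suc m. (harm_tail (Suc m) k)\<^sup>2) = 2 * real m - harm m"
proof (induction m)
  case 0
  then show ?case by (simp add: harm_tail_def harm_expand)
next
  case (Suc m)
  define c where "c = 1 / real (Suc m)"
  have "(\<Sum>k=1..Suc (Suc m). (harm_tail (Suc (Suc m)) k)\<^sup>2) = (\<Sum>k=1..Suc m. (harm_tail (Suc m) k + c)\<^sup>2)"
    by (simp add: harm_tail_Suc harm_tail_def c_def)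
  also have "\<dots> = (\<Sum>k=1..Suc m. (harm_tail (Suc m) k)\<^sup>2)
      + 2 * c * (\<Sum>k=1..Suc m. harm_tail (Suc m) k) + real (Suc m) * c\<^sup>2"
    by (simp add: power2_sum sum.distrib sum_distrib_left mult_ac del: sum.cl_ivl_Suc)
  also have "\<dots> = 2 * real (Suc m) - harm (Suc m)"
  proof -
    have "real (Suc m) * (1 / real (Suc m))\<^sup>2 = 1 / real (Suc m)"
      by (simp add: power2_eq_square)
    then show ?thesis
      unfolding Suc sum_harm_tail c_def
      by (simp add: harm_Suc field_simps del: of_nat_Suc) (simp add: algebra_simps)
  qed
  finally show ?case .
qed

lemma sum_second_moments_Suc:
  assumes "0 \<le> p" "p \<le> 1"
  shows "sum_second_moments p (Suc m) = real m * (1 + 2 * (2 * p - 1)\<^sup>2) - 2 * (2 * p - 1)\<^sup>2 * harm m"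
proof -
  let ?a = "(2 * p - 1)\<^sup>2" and ?B = "\<lambda>k. \<Sum>j\<in>{k..<Suc m}. 1 / (real j)\<^sup>2"
  have sum_B: "(\<Sum>k=1..Suc m. ?B k) = harm m"
  proof -
    have "(\<Sum>k=1..Suc m. ?B k) = (\<Sum>j\<in>{1..<Suc m}. real j * (1 / (real j)\<^sup>2))"
      by (rule sum_sum_atLeastLessThan_swap)
    also have "\<dots> = (\<Sum>j=1..m. inverse (real j))"
      by (intro sum.cong) (auto simp: power2_eq_square field_simps)
    finally show ?thesis by (simp add: harm_def)
  qed
  have "sum_second_moments p (Suc m) = (\<Sum>k=1..Suc m. harm_tail (Suc m) k + ?a * ((harm_tail (Suc m) k)\<^sup>2 - ?B k))"
    unfolding sum_second_moments_def using assms
    by (intro sum.cong refl expectation_walk_at_rrt_deg) auto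
  also have "\<dots> = (\<Sum>k=1..Suc m. harm_tail (Suc m) k)
      + ?a * ((\<Sum>k=1..Suc m. (harm_tail (Suc m) k)\<^sup>2) - (\<Sum>k=1..Suc m. ?B k))"
    by (simp add: sum.distrib sum_distrib_left sum_subtractf right_diff_distrib del: sum.cl_ivl_Suc)
  also have "\<dots> = real m * (1 + 2 * ?a) - 2 * ?a * harm m"
    unfolding sum_harm_tail sum_harm_tail_square sum_B by (simp add: algebra_simps)
  finally show ?thesis .
qed

lemma harm_le_1_plus_ln: "0 < m \<Longrightarrow> harm m \<le> 1 + ln (real m)"
  using euler_mascheroni_sequence_decreasing[of 1 m] by (simp add: harm_expand)

lemma sum_second_moments_deviation_le:
  assumes "0 \<le> p" "p \<le> 1" "2 \<le> n"
  shows "\<bar>sum_second_moments p n - real n * (1 + 2 * (2 * p - 1)\<^sup>2)\<bar> \<le> 5 + 2 * ln (real n)"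
proof -
  let ?a = "(2 * p - 1)\<^sup>2"
  obtain m where n: "n = Suc m" and "0 < m"
    using \<open>2 \<le> n\<close> by (cases n) auto
  have a: "0 \<le> ?a" "?a \<le> 1"
    using assms by (auto simp: abs_square_le_1)
  have "harm m \<le> 1 + ln (real n)"
  proof -
    have "ln (real m) \<le> ln (real n)"
      using \<open>0 < m\<close> n by simp
    then show ?thesis
      using harm_le_1_plus_ln[OF \<open>0 < m\<close>] by linarith
  qed
  moreover have "0 \<le> ?a * harm m" "?a * harm m \<le> harm m"
    using a harm_nonneg[where 'a = real, of m] by (auto intro: mult_left_le_one_le)
  moreover have "0 \<le> ln (real n)"
    using n by simp
  moreover have "sum_second_moments p n - real n * (1 + 2 * ?a) = - (1 + 2 * ?a) - 2 * ?a * harm m"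
    unfolding n sum_second_moments_Suc[OF assms(1,2)] by (simp add: algebra_simps)
  ultimately show ?thesis
    using a by (simp only: abs_le_iff) linarith
qed

theorem lemma2p3:
  fixes p1 :: real
  assumes "0 \<le> p1" "p1 \<le> 1"
  defines "\<alpha>1 \<equiv> 2 * p1 - 1"
  shows "(\<lambda>n. sum_second_moments p1 n - real n * (1 + 2 * \<alpha>1^2))
           \<in> O(\<lambda>n. (ln (real n))^2)"
proof -
  have "(\<lambda>n. sum_second_moments p1 n - real n * (1 + 2 * \<alpha>1^2)) \<in> O(\<lambda>n. 5 + 2 * ln (real n))"
    using sum_second_moments_deviation_le[OF assms(1,2)] unfolding \<alpha>1_def
    by (intro bigoI[where c = 1] eventually_sequentiallyI[of 2]) auto
  also have "(\<lambda>n. 5 + 2 * ln (real n)) \<in> O(\<lambda>n. (ln (real n))^2)"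
    by real_asymp
  finally show ?thesis .
qed

end
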